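(* Let $(A,\circ)$ be a Novikov algebra, let $f:A\to A$ be a linear map, and define a new multiplication $a\bullet b=a\circ f(b)$. Then for all $a,b,c,d\in A$, $$((a\bullet b)\bullet c)\bullet d+((a\bullet c)\bullet d)\bullet b+((a\bullet d)\bullet b)\bullet c-((a\bullet c)\bullet b)\bullet d-((a\bullet d)\bullet c)\bullet b-((a\bullet b)\bullet d)\bullet c=0.$$
   Context: A (right) Novikov algebra is an algebra $(A,\circ)$ satisfying $a\circ(b\circ c)-(a\circ b)\circ c=a\circ(c\circ b)-(a\circ c)\circ b$ and $a\circ(b\circ c)=b\circ(a\circ c)$ for all $a,b,c$. *)

theory Defs
  imports Complex_Main
begin

definition bilinear_prod ::
  "('k::field \<Rightarrow> 'v::ab_group_add \<Rightarrow> 'v) \<Rightarrow> ('v \<Rightarrow> 'v \<Rightarrow> 'v) \<Rightarrow> bool" where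
  "bilinear_prod scale mult \<longleftrightarrow>
     (\<forall>a b c. mult (a + b) c = mult a c + mult b c) \<and>
     (\<forall>a b c. mult a (b + c) = mult a b + mult a c) \<and>
     (\<forall>k a b. mult (scale k a) b = scale k (mult a b)) \<and>
     (\<forall>k a b. mult a (scale k b) = scale k (mult a b))"

definition novikov_algebra ::
  "('k::field \<Rightarrow> 'v::ab_group_add \<Rightarrow> 'v) \<Rightarrow> ('v \<Rightarrow> 'v \<Rightarrow> 'v) \<Rightarrow> bool" where
  "novikov_algebra scale mult \<longleftrightarrow>
     Vector_Spaces.vector_space scale \<and> bilinear_prod scale mult \<and>
     (\<forall>a b c. mult a (mult b c) - mult (mult a b) c = mult a (mult c b) - mult (mult a c) b) \<and>
     (\<forall>a b c. mult a (mult b c) = mult b (mult a c))"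

end

theory Submission
  imports Defs
begin

text \<open>Since \<open>a \<bullet> b = a \<circ> f b\<close>, every term of the identity is \<open>((a \<circ> x) \<circ> y) \<circ> z\<close> with
\<open>x, y, z\<close> a permutation of \<open>f b, f c, f d\<close>, so it suffices to prove the corresponding
alternating sum over cyclic permutations in the Novikov algebra itself, for arbitrary
\<open>x, y, z\<close>. Right symmetry and left commutativity turn \<open>((a x) y) z - ((a x) z) y\<close> into
\<open>y ((a x) z) - z ((a x) y)\<close>; regrouping the three cyclic shifts by their outer left
factor and applying right symmetry again leaves \<open>a\<close> times a sum of terms \<open>u (v w)\<close>
which cancels in pairs by left commutativity.\<close>

locale novikov_product =
  fixes mult :: "'v::ab_group_add \<Rightarrow> 'v \<Rightarrow> 'v"  (infixl "\<cdot>" 70)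
  assumes add_right: "a \<cdot> (b + c) = a \<cdot> b + a \<cdot> c"
    and right_symmetric: "a \<cdot> (b \<cdot> c) - a \<cdot> b \<cdot> c = a \<cdot> (c \<cdot> b) - a \<cdot> c \<cdot> b"
    and left_commutative: "a \<cdot> (b \<cdot> c) = b \<cdot> (a \<cdot> c)"
begin

lemma diff_right: "a \<cdot> (b - c) = a \<cdot> b - a \<cdot> c"
  by (metis add_right diff_add_cancel eq_diff_eq)

lemma right_commutator: "a \<cdot> b \<cdot> c - a \<cdot> c \<cdot> b = a \<cdot> (b \<cdot> c) - a \<cdot> (c \<cdot> b)"
  using right_symmetric[of a b c] by (simp add: algebra_simps)

lemma right_commutator_eq_left_mult:
  "a \<cdot> b \<cdot> c - a \<cdot> c \<cdot> b = b \<cdot> (a \<cdot> c) - c \<cdot> (a \<cdot> b)"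
  using right_commutator left_commutative by metis

lemma left_mult_right_commutator:
  "u \<cdot> (a \<cdot> b \<cdot> c) - u \<cdot> (a \<cdot> c \<cdot> b) = a \<cdot> (u \<cdot> (b \<cdot> c)) - a \<cdot> (u \<cdot> (c \<cdot> b))"
proof -
  have "u \<cdot> (a \<cdot> b \<cdot> c) - u \<cdot> (a \<cdot> c \<cdot> b) = u \<cdot> (a \<cdot> (b \<cdot> c) - a \<cdot> (c \<cdot> b))"
    by (simp only: diff_right[symmetric] right_commutator)
  also have "\<dots> = a \<cdot> (u \<cdot> (b \<cdot> c)) - a \<cdot> (u \<cdot> (c \<cdot> b))"
    by (simp add: diff_right left_commutative[of u a])
  finally show ?thesis .
qed

theorem cyclic_right_commutator_sum:
  "a \<cdot> x \<cdot> y \<cdot> z + a \<cdot> y \<cdot> z \<cdot> x + a \<cdot> z \<cdot> x \<cdot> y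
     - a \<cdot> y \<cdot> x \<cdot> z - a \<cdot> z \<cdot> y \<cdot> x - a \<cdot> x \<cdot> z \<cdot> y = 0"
proof -
  have "a \<cdot> x \<cdot> y \<cdot> z + a \<cdot> y \<cdot> z \<cdot> x + a \<cdot> z \<cdot> x \<cdot> y
          - a \<cdot> y \<cdot> x \<cdot> z - a \<cdot> z \<cdot> y \<cdot> x - a \<cdot> x \<cdot> z \<cdot> y
      = (a \<cdot> x \<cdot> y \<cdot> z - a \<cdot> x \<cdot> z \<cdot> y) + (a \<cdot> y \<cdot> z \<cdot> x - a \<cdot> y \<cdot> x \<cdot> z)
          + (a \<cdot> z \<cdot> x \<cdot> y - a \<cdot> z \<cdot> y \<cdot> x)"
    by (simp add: algebra_simps)
  also have "\<dots> = (y \<cdot> (a \<cdot> x \<cdot> z) - y \<cdot> (a \<cdot> z \<cdot> x)) + (z \<cdot> (a \<cdot> y \<cdot> x) - z \<cdot> (a \<cdot> x \<cdot> y))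
          + (x \<cdot> (a \<cdot> z \<cdot> y) - x \<cdot> (a \<cdot> y \<cdot> z))"
    by (simp add: right_commutator_eq_left_mult algebra_simps)
  also have "\<dots> = (a \<cdot> (y \<cdot> (x \<cdot> z)) - a \<cdot> (y \<cdot> (z \<cdot> x))) + (a \<cdot> (z \<cdot> (y \<cdot> x)) - a \<cdot> (z \<cdot> (x \<cdot> y)))
          + (a \<cdot> (x \<cdot> (z \<cdot> y)) - a \<cdot> (x \<cdot> (y \<cdot> z)))"
    by (simp only: left_mult_right_commutator)
  also have "\<dots> = 0"
    by (simp add: left_commutative[of y x] left_commutative[of y z] left_commutative[of x z])
  finally show ?thesis .
qed

end

lemma novikov_algebra_imp_novikov_product:
  "novikov_algebra scale mult \<Longrightarrow> novikov_product mult"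
  unfolding novikov_algebra_def bilinear_prod_def novikov_product_def by blast

theorem mainTheorem8:
  fixes scale :: "'k::field \<Rightarrow> 'v::ab_group_add \<Rightarrow> 'v"
    and mult :: "'v \<Rightarrow> 'v \<Rightarrow> 'v"
    and f :: "'v \<Rightarrow> 'v"
    and bullet :: "'v \<Rightarrow> 'v \<Rightarrow> 'v"
  assumes "novikov_algebra scale mult"
    and "Vector_Spaces.linear scale scale f"
    and "\<And>x y. bullet x y = mult x (f y)"
  shows "\<forall>a b c d.
    bullet (bullet (bullet a b) c) d + bullet (bullet (bullet a c) d) b + bullet (bullet (bullet a d) b) c
    - bullet (bullet (bullet a c) b) d - bullet (bullet (bullet a d) c) b - bullet (bullet (bullet a b) d) c = 0"
  using novikov_product.cyclic_right_commutator_sum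
    [OF novikov_algebra_imp_novikov_product[OF assms(1)]]
  by (simp add: assms(3))

end
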